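(* Let $(M,\omega_0)$, $\chi$, $\Gamma$, $f$ be as in the context, with the Standing Assumption in force, and let $\Gamma_n=\{\lambda\in\mathbb{R}^n:\lambda_i>0\ \forall i\}$. For every $C_0>0$ and every $x\in M$ the set $$\{\lambda'\in\Gamma:\ f(\lambda')\le C_0,\ \lambda'-\lambda[\chi](x)\in\Gamma_n\}$$ is bounded, and its diameter can be bounded, uniformly in $x\in M$, in terms of $f$, $C_0$, $\chi$ and the metric $g$.
   Context: $(M,\omega_0)$ is a compact complex manifold without boundary of complex dimension $n$ with Hermitian metric $\omega_0=\sqrt{-1}g_{i\bar j}dz_i\wedge d\bar z_j$. $\chi$ is a smooth real $(1,1)$-form; $\lambda[\chi](x)$ is the unordered $n$-tuple of eigenvalues of $g^{i\bar k}\chi_{j\bar k}$ at $x$. $\Gamma\subset\mathbb{R}^n$ is a closed convex permutation-symmetric cone containing $\Gamma_n$, contained in $\{\sum\lambda_i\ge0\}$ with $\mathrm{Int}\,\Gamma\subset\{\sum\lambda_i>0\}$; $f$ smooth symmetric on $\Gamma$. Standing Assumption: (i) $\partial f/\partial\lambda_i>0$, $f$ concave, $f>0$ in $\mathrm{Int}\,\Gamma$, $f=0$ on $\partial\Gamma$; (ii) $\lambda[\chi](x)\in\mathrm{Int}\,\Gamma$ for all $x$; (iii) $f$ positively homogeneous of degree 1 with $f(\lambda)\ge c_0(\prod\lambda_i)^{1/n}$ on $\Gamma_n$, some $c_0>0$. *)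

theory Defs
  imports "HOL-Analysis.Analysis"
begin

definition hermitian_mat :: "complex^'n^'n \<Rightarrow> bool" where
  "hermitian_mat A \<longleftrightarrow> (\<forall>i j. A$i$j = cnj (A$j$i))"

definition posdef_hermitian :: "complex^'n^'n \<Rightarrow> bool" where
  "posdef_hermitian A \<longleftrightarrow> hermitian_mat A \<and>
     (\<forall>v::complex^'n. v \<noteq> 0 \<longrightarrow> 0 < Re (\<Sum>i\<in>UNIV. \<Sum>j\<in>UNIV. v$i * A$i$j * cnj (v$j)))"

text \<open>The endomorphism g^{i kbar} chi_{j kbar}: with g^{i kbar} g_{j kbar} = delta_{ij},
  the matrix (g^{i kbar})_{i,k} is the inverse of the transpose of (g_{j kbar})_{j,k}.\<close>
definition endo_mat :: "complex^'n^'n \<Rightarrow> complex^'n^'n \<Rightarrow> complex^'n^'n" where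
  "endo_mat G X = (\<chi> i j. \<Sum>k\<in>UNIV. matrix_inv (transpose G) $ i $ k * X $ j $ k)"

text \<open>The unordered n-tuple
  lambda[chi](x) is represented by all its orderings.\<close>
definition eigen_tuple :: "complex^'n^'n \<Rightarrow> real^'n \<Rightarrow> bool" where
  "eigen_tuple A \<mu> \<longleftrightarrow> (\<forall>t::complex. det (mat t - A) = (\<Prod>i\<in>UNIV. t - complex_of_real (\<mu>$i)))"

definition lam_chi :: "(complex^'n^'n) \<Rightarrow> (complex^'n^'n) \<Rightarrow> (real^'n) set" where
  "lam_chi G X = {\<mu>. eigen_tuple (endo_mat G X) \<mu>}"

definition pos_cone :: "(real^'n) set" ("\<Gamma>\<^sub>n") where
  "pos_cone = {lam. \<forall>i. 0 < lam$i}"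

definition perm_vec :: "('n \<Rightarrow> 'n) \<Rightarrow> real^'n \<Rightarrow> real^'n" where
  "perm_vec p lam = (\<chi> i. lam $ p i)"

definition admissible_cone :: "(real^'n) set \<Rightarrow> bool" where
  "admissible_cone \<Gamma> \<longleftrightarrow> closed \<Gamma> \<and> convex \<Gamma> \<and> cone \<Gamma> \<and>
     (\<forall>p lam. p permutes (UNIV::'n set) \<longrightarrow> (lam \<in> \<Gamma> \<longleftrightarrow> perm_vec p lam \<in> \<Gamma>)) \<and>
     pos_cone \<subseteq> \<Gamma> \<and>
     \<Gamma> \<subseteq> {lam. 0 \<le> (\<Sum>i\<in>UNIV. lam$i)} \<and>
     interior \<Gamma> \<subseteq> {lam. 0 < (\<Sum>i\<in>UNIV. lam$i)}"

definition standing_f :: "(real^'n) set \<Rightarrow> (real^'n \<Rightarrow> real) \<Rightarrow> bool" where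
  "standing_f \<Gamma> f \<longleftrightarrow>
     continuous_on \<Gamma> f \<and>
     (\<forall>p lam. p permutes (UNIV::'n set) \<longrightarrow> lam \<in> \<Gamma> \<longrightarrow> f (perm_vec p lam) = f lam) \<and>
     (\<forall>lam\<in>interior \<Gamma>. \<exists>f'. (f has_derivative f') (at lam) \<and>
         (\<forall>i. 0 < f' (axis i 1))) \<and>
     concave_on \<Gamma> f \<and>
     (\<forall>lam\<in>interior \<Gamma>. 0 < f lam) \<and>
     (\<forall>lam\<in>frontier \<Gamma>. f lam = 0) \<and>
     (\<forall>lam\<in>\<Gamma>. \<forall>t>0. f (t *\<^sub>R lam) = t * f lam) \<and>
     (\<exists>c0>0. \<forall>lam\<in>pos_cone. c0 * root CARD('n) (\<Prod>i\<in>UNIV. lam$i) \<le> f lam)"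

end

theory Submission
  imports Defs
begin

text \<open>Each eigenvalue \<open>\<mu>\<^sub>i\<close> of \<open>g\<^sup>-\<^sup>1\<chi>\<close> at \<open>x\<close> is a Rayleigh quotient
  \<open>\<chi>(w,w) / g(w,w)\<close> of a unit vector \<open>w\<close>, so by compactness of \<open>M\<close> the eigenvalue tuples
  are bounded; being cut out by the continuous characteristic-polynomial identities, they form a
  compact subset of the open set \<open>Int \<Gamma>\<close>. Hence one \<open>\<delta> > 0\<close> works for all \<open>x\<close>:
  \<open>a = \<mu> - \<delta>(1,\<dots>,1) \<in> Int \<Gamma>\<close>. For \<open>\<lambda>'\<close> in the set, \<open>w = \<lambda>' - a\<close> has all entries
  \<open>\<ge> \<delta>\<close>; concavity and homogeneity make \<open>f\<close> superadditive, so
  \<open>c\<^sub>0 (\<Prod> w\<^sub>i)\<^bsup>1/n\<^esup> \<le> f(w) \<le> f(\<lambda>') \<le> C\<^sub>0\<close>, which bounds every \<open>w\<^sub>j\<close> by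
  \<open>(C\<^sub>0/c\<^sub>0)\<^sup>n / \<delta>\<^sup>n\<^sup>-\<^sup>1\<close>.\<close>

definition herm_form :: "complex^'n^'n \<Rightarrow> complex^'n \<Rightarrow> complex" where
  "herm_form A v = (\<Sum>i\<in>UNIV. \<Sum>j\<in>UNIV. v$i * A$i$j * cnj (v$j))"

lemma posdef_hermitian_herm_form_pos:
  "posdef_hermitian A \<Longrightarrow> v \<noteq> 0 \<Longrightarrow> 0 < Re (herm_form A v)"
  unfolding posdef_hermitian_def herm_form_def by blast

lemma herm_form_transpose: "herm_form A v = (\<Sum>j\<in>UNIV. cnj (v$j) * (transpose A *v v)$j)"
proof -
  have "herm_form A v = (\<Sum>j\<in>UNIV. \<Sum>i\<in>UNIV. v$i * A$i$j * cnj (v$j))"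
    unfolding herm_form_def by (rule sum.swap)
  then show ?thesis
    by (simp add: matrix_vector_mult_def transpose_def sum_distrib_left algebra_simps)
qed

lemma herm_form_scaleR: "herm_form A (r *\<^sub>R v) = of_real (r\<^sup>2) * herm_form A v"
  unfolding herm_form_def vector_scaleR_component
  by (simp add: scaleR_conv_of_real sum_distrib_left power2_eq_square algebra_simps)

lemma det_eq_0_imp_kernel:
  fixes A :: "'a::field^'n^'n"
  assumes "det A = 0"
  obtains w where "w \<noteq> 0" "A *v w = 0"
proof -
  have "\<not> (\<exists>B. B ** A = mat 1)"
    using assms by (simp flip: invertible_left_inverse add: invertible_det_nz)
  then show thesis
    using matrix_left_invertible_ker that by blast
qed

lemma posdef_hermitian_det_nz:
  assumes "posdef_hermitian A"
  shows "det A \<noteq> 0"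
proof
  assume "det A = 0"
  then obtain w where "w \<noteq> 0" "transpose A *v w = 0"
    using det_eq_0_imp_kernel[of "transpose A"] by auto
  then have "herm_form A w = 0"
    by (simp only: herm_form_transpose) simp
  with posdef_hermitian_herm_form_pos[OF assms \<open>w \<noteq> 0\<close>] show False
    by simp
qed

lemma matrix_inv_right:
  assumes "invertible A"
  shows "A ** matrix_inv A = mat 1"
  using assms unfolding invertible_def matrix_inv_def by (rule someI2_ex) auto

lemma transpose_mult_endo_mat:
  fixes G X :: "complex^'n^'n"
  assumes "det G \<noteq> 0"
  shows "transpose G ** endo_mat G X = transpose X"
proof -
  have "endo_mat G X = matrix_inv (transpose G) ** transpose X"
    by (simp add: endo_mat_def vec_eq_iff matrix_matrix_mult_def transpose_def)
  moreover have "transpose G ** matrix_inv (transpose G) = mat 1"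
    using assms by (simp add: matrix_inv_right invertible_det_nz)
  ultimately show ?thesis by (simp add: matrix_mul_assoc)
qed

lemma matrix_mul_mat_component: "(A ** mat c) $ i $ j = A $ i $ j * (c::'a::semiring_1)"
  by (simp add: matrix_matrix_mult_def mat_def if_distrib cong: if_cong)

lemma mat_matrix_vector_mult: "mat c *v x = c *s (x::'a::semiring_1^'n)"
  by (simp add: vec_eq_iff matrix_vector_mult_def mat_def if_distrib if_distribR cong del: if_weak_cong)

text \<open>Multiplying the characteristic polynomial of \<open>endo_mat G X\<close> by \<open>det G\<close> clears the
  inverse matrix, so membership in \<open>lam_chi\<close> becomes a condition continuous in \<open>(G, X)\<close>.\<close>

lemma lam_chi_iff_det_pencil:
  fixes G X :: "complex^'n^'n"
  assumes "det G \<noteq> 0"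
  shows "\<mu> \<in> lam_chi G X \<longleftrightarrow>
    (\<forall>t. det (\<chi> i j. t * G$j$i - X$j$i) = det G * (\<Prod>i\<in>UNIV. t - of_real (\<mu>$i)))"
proof -
  have "(\<chi> i j. t * G$j$i - X$j$i) = transpose G ** mat t - transpose X" for t
    by (simp add: vec_eq_iff matrix_mul_mat_component transpose_def mult.commute)
  also have "\<dots> t = transpose G ** (mat t - endo_mat G X)" for t
    using transpose_mult_endo_mat[OF assms]
    by (simp add: vec_eq_iff matrix_matrix_mult_def algebra_simps sum_subtractf)
  finally have "det (\<chi> i j. t * G$j$i - X$j$i) = det G * det (mat t - endo_mat G X)" for t
    by (simp add: det_mul det_transpose)
  then show ?thesis
    using assms by (simp add: lam_chi_def eigen_tuple_def)
qed

lemma lam_chi_eigenvector: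
  fixes G X :: "complex^'n^'n"
  assumes "det G \<noteq> 0" "\<mu> \<in> lam_chi G X"
  obtains w where "w \<noteq> 0" "herm_form X w = of_real (\<mu>$i) * herm_form G w"
proof -
  let ?E = "endo_mat G X" and ?t = "of_real (\<mu>$i) :: complex"
  have "det (mat ?t - ?E) = 0"
    using assms(2) by (auto simp: lam_chi_def eigen_tuple_def prod_zero_iff)
  then obtain w where w: "w \<noteq> 0" "(mat ?t - ?E) *v w = 0"
    by (rule det_eq_0_imp_kernel)
  then have "?E *v w = ?t *s w"
    by (simp add: matrix_vector_mult_diff_rdistrib mat_matrix_vector_mult)
  then have "transpose X *v w = ?t *s (transpose G *v w)"
    using transpose_mult_endo_mat[OF assms(1)]
    by (metis matrix_vector_mul_assoc matrix_vector_mul_linear_gen vec.linear_scale)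
  then have "herm_form X w = ?t * herm_form G w"
    unfolding herm_form_transpose by (simp add: sum_distrib_left mult.left_commute)
  with w(1) show thesis by (rule that)
qed

lemma lam_chi_Rayleigh_quotient:
  assumes "posdef_hermitian G" "\<mu> \<in> lam_chi G X"
  obtains w where "norm w = 1" "\<mu>$i = Re (herm_form X w) / Re (herm_form G w)"
proof -
  obtain w where w: "w \<noteq> 0" "herm_form X w = of_real (\<mu>$i) * herm_form G w"
    using lam_chi_eigenvector[OF posdef_hermitian_det_nz[OF assms(1)] assms(2)] .
  define u where "u = (1 / norm w) *\<^sub>R w"
  have "norm u = 1" "u \<noteq> 0"
    using w(1) by (simp_all add: u_def)
  have "herm_form X u = of_real (\<mu>$i) * herm_form G u"
    using w(2) by (simp add: u_def herm_form_scaleR)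
  moreover have "0 < Re (herm_form G u)"
    using posdef_hermitian_herm_form_pos[OF assms(1) \<open>u \<noteq> 0\<close>] .
  ultimately have "\<mu>$i = Re (herm_form X u) / Re (herm_form G u)"
    by simp
  with \<open>norm u = 1\<close> show thesis by (rule that)
qed

lemma continuous_on_det:
  fixes A :: "'b::topological_space \<Rightarrow> 'a::real_normed_field^'n^'n"
  assumes "continuous_on S A"
  shows "continuous_on S (\<lambda>p. det (A p))"
  unfolding det_def by (intro continuous_intros assms)

lemma closedin_lam_chi_graph:
  fixes g chi :: "'m::topological_space \<Rightarrow> complex^'n^'n"
  assumes "continuous_on M g" "continuous_on M chi" "\<forall>x\<in>M. det (g x) \<noteq> 0"
  shows "closedin (top_of_set (M \<times> S))
    {p \<in> M \<times> S. snd p \<in> lam_chi (g (fst p)) (chi (fst p))}"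
proof -
  define h where "h t p = det (\<chi> i j. t * g (fst p) $ j $ i - chi (fst p) $ j $ i)
      - det (g (fst p)) * (\<Prod>i\<in>UNIV. t - of_real (snd p $ i))"
    for t and p :: "'m \<times> (real^'n)"
  have "snd p \<in> lam_chi (g (fst p)) (chi (fst p)) \<longleftrightarrow> (\<forall>t. h t p = 0)" if "p \<in> M \<times> S" for p
    using that lam_chi_iff_det_pencil[OF assms(3)[rule_format, of "fst p"]]
    by (simp add: h_def mem_Times_iff)
  then have "{p \<in> M \<times> S. snd p \<in> lam_chi (g (fst p)) (chi (fst p))} = (\<Inter>t. {p \<in> M \<times> S. h t p = 0})"
    by blast
  moreover have "closedin (top_of_set (M \<times> S)) {p \<in> M \<times> S. h t p = 0}" for t
  proof (rule continuous_closedin_preimage_constant)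
    have "continuous_on (M \<times> S) (\<lambda>p. g (fst p))" "continuous_on (M \<times> S) (\<lambda>p. chi (fst p))"
      using assms(1,2) by (auto intro: continuous_on_compose2[OF _ continuous_on_fst])
    then show "continuous_on (M \<times> S) (h t)"
      unfolding h_def
      by (intro continuous_intros continuous_on_det continuous_on_component continuous_on_snd)
  qed
  ultimately show ?thesis
    by (simp add: closedin_INT)
qed

lemma lam_chi_uniformly_bounded:
  fixes g chi :: "'m::topological_space \<Rightarrow> complex^'n^'n"
  assumes "compact M" "continuous_on M g" "continuous_on M chi"
    and "\<forall>x\<in>M. posdef_hermitian (g x)"
  obtains R where "\<forall>x\<in>M. \<forall>\<mu>\<in>lam_chi (g x) (chi x). norm \<mu> \<le> R"
proof -
  let ?S = "sphere (0::complex^'n) 1"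
  define F where "F p = Re (herm_form (chi (fst p)) (snd p)) / Re (herm_form (g (fst p)) (snd p))"
    for p
  have "continuous_on (M \<times> ?S) F"
  proof -
    have "continuous_on (M \<times> ?S) (\<lambda>p. g (fst p))" "continuous_on (M \<times> ?S) (\<lambda>p. chi (fst p))"
      using assms(2,3) by (auto intro: continuous_on_compose2[OF _ continuous_on_fst])
    moreover have "Re (herm_form (g (fst p)) (snd p)) \<noteq> 0" if "p \<in> M \<times> ?S" for p
      using that assms(4) posdef_hermitian_herm_form_pos[of "g (fst p)" "snd p"] by fastforce
    ultimately show ?thesis
      unfolding F_def herm_form_def
      by (intro continuous_intros continuous_on_component continuous_on_snd) auto
  qed
  then have "compact (F ` (M \<times> ?S))"
    by (intro compact_continuous_image compact_Times assms(1) compact_sphere)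
  then obtain B where B: "\<forall>p\<in>M \<times> ?S. \<bar>F p\<bar> \<le> B"
    by (metis compact_imp_bounded bounded_real imageI)
  have "norm \<mu> \<le> real CARD('n) * B" if x: "x \<in> M" and \<mu>: "\<mu> \<in> lam_chi (g x) (chi x)" for x \<mu>
  proof -
    have "\<bar>\<mu>$i\<bar> \<le> B" for i
    proof -
      obtain w where "norm w = 1" "\<mu>$i = F (x, w)"
        using lam_chi_Rayleigh_quotient[OF _ \<mu>] assms(4) x by (metis F_def fst_conv snd_conv)
      then show ?thesis using B x by simp
    qed
    then have "(\<Sum>i\<in>UNIV. \<bar>\<mu>$i\<bar>) \<le> real CARD('n) * B"
      using sum_bounded_above[of UNIV "\<lambda>i. \<bar>\<mu>$i\<bar>" B] by simp
    then show ?thesis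
      using norm_le_l1_cart[of \<mu>] by linarith
  qed
  then show thesis using that by blast
qed

lemma compact_lam_chi_Union:
  fixes g chi :: "'m::topological_space \<Rightarrow> complex^'n^'n"
  assumes "compact M" "continuous_on M g" "continuous_on M chi"
    and "\<forall>x\<in>M. posdef_hermitian (g x)"
  shows "compact (\<Union>x\<in>M. lam_chi (g x) (chi x))"
proof -
  obtain R where R: "\<forall>x\<in>M. \<forall>\<mu>\<in>lam_chi (g x) (chi x). norm \<mu> \<le> R"
    using lam_chi_uniformly_bounded[OF assms] .
  let ?Gr = "{p \<in> M \<times> cball 0 R. snd p \<in> lam_chi (g (fst p)) (chi (fst p))}"
  have "closedin (top_of_set (M \<times> cball 0 R)) ?Gr"
    using closedin_lam_chi_graph[OF assms(2,3)] assms(4) posdef_hermitian_det_nz by blast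
  then have "compact ?Gr"
    by (rule closedin_compact[rotated]) (intro compact_Times assms(1) compact_cball)
  then have "compact (snd ` ?Gr)"
    by (intro compact_continuous_image continuous_intros)
  moreover have "(\<Union>x\<in>M. lam_chi (g x) (chi x)) = snd ` ?Gr"
  proof
    show "(\<Union>x\<in>M. lam_chi (g x) (chi x)) \<subseteq> snd ` ?Gr"
      using R by (auto intro!: image_eqI[where x="(x, \<mu>)" for x \<mu>])
  qed auto
  ultimately show ?thesis
    by simp
qed

lemma concave_homogeneous_superadd:
  fixes f :: "'a::real_vector \<Rightarrow> real"
  assumes "convex \<Gamma>" "concave_on \<Gamma> f" "\<forall>v\<in>\<Gamma>. \<forall>t>0. f (t *\<^sub>R v) = t * f v"
    and "a \<in> \<Gamma>" "b \<in> \<Gamma>"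
  shows "f a + f b \<le> f (a + b)"
proof -
  let ?m = "(1 - 1/2) *\<^sub>R a + (1/2) *\<^sub>R b"
  have "?m \<in> \<Gamma>"
    using convexD[OF assms(1,4,5), of "1 - 1/2" "1/2"] by simp
  have "(1 - 1/2) * f a + (1/2) * f b \<le> f ?m"
    using concave_onD[OF assms(2), of "1/2" a b] assms(4,5) by simp
  moreover have "a + b = (2::real) *\<^sub>R ?m"
    by (simp add: algebra_simps)
  then have "f (a + b) = 2 * f ?m"
    using assms(3) \<open>?m \<in> \<Gamma>\<close> by simp
  ultimately show ?thesis by simp
qed

lemma component_le_of_root_prod_le:
  fixes w :: "real^'n"
  assumes "\<delta> > 0" "\<forall>i. \<delta> \<le> w$i" "c > 0" "c * root CARD('n) (\<Prod>i\<in>UNIV. w$i) \<le> C"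
  shows "w$j \<le> (C/c)^CARD('n) / \<delta>^(CARD('n) - 1)"
proof -
  let ?n = "CARD('n)" and ?P = "\<Prod>i\<in>UNIV. w$i"
  have w_pos: "0 < w$i" for i
    using assms(1,2) by (meson less_le_trans)
  then have "0 \<le> ?P"
    by (simp add: less_imp_le prod_nonneg)
  have "root ?n ?P \<le> C/c"
    using assms(3,4) by (simp add: field_simps mult.commute)
  then have "?P \<le> (C/c)^?n"
    using power_mono[of "root ?n ?P" "C/c" ?n] \<open>0 \<le> ?P\<close> by simp
  moreover have "w$j * \<delta>^(?n - 1) \<le> ?P"
  proof -
    have "\<delta>^(?n - 1) = (\<Prod>i\<in>UNIV-{j}. \<delta>)"
      by (simp add: card_Diff_singleton)
    also have "\<dots> \<le> (\<Prod>i\<in>UNIV-{j}. w$i)"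
      using assms(1,2) by (intro prod_mono) auto
    finally have "w$j * \<delta>^(?n - 1) \<le> w$j * (\<Prod>i\<in>UNIV-{j}. w$i)"
      using w_pos[of j] by simp
    then show ?thesis
      by (simp add: prod.remove[of UNIV j])
  qed
  ultimately show ?thesis
    using assms(1) by (simp add: pos_le_divide_eq)
qed

lemma sublevel_component_le:
  fixes f :: "real^'n \<Rightarrow> real"
  assumes "convex \<Gamma>" "concave_on \<Gamma> f" "\<forall>v\<in>\<Gamma>. \<forall>t>0. f (t *\<^sub>R v) = t * f v"
    and "pos_cone \<subseteq> \<Gamma>"
    and "c > 0" "\<forall>v\<in>pos_cone. c * root CARD('n) (\<Prod>i\<in>UNIV. v$i) \<le> f v"
    and "a \<in> \<Gamma>" "0 \<le> f a" "v \<in> \<Gamma>" "f v \<le> C"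
    and "\<delta> > 0" "\<forall>i. \<delta> \<le> v$i - a$i"
  shows "v$j - a$j \<le> (C/c)^CARD('n) / \<delta>^(CARD('n) - 1)"
proof -
  have "v - a \<in> pos_cone"
    using assms(11,12) by (auto simp: pos_cone_def) (meson diff_gt_0_iff_gt less_le_trans)
  then have "f a + f (v - a) \<le> f v"
    using concave_homogeneous_superadd[OF assms(1-3,7), of "v - a"] assms(4) by auto
  then have "c * root CARD('n) (\<Prod>i\<in>UNIV. (v - a)$i) \<le> C"
    using assms(6,8,10) \<open>v - a \<in> pos_cone\<close> by fastforce
  then show ?thesis
    using component_le_of_root_prod_le[of \<delta> "v - a"] assms(5,11,12) by simp
qed

lemma norm_const_vec_le: "norm (\<chi> i::'n::finite. c) \<le> real CARD('n) * \<bar>c\<bar>"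
  using norm_le_l1_cart[of "\<chi> i::'n. c"] by simp

lemma compact_shift_into_open:
  fixes K U :: "(real^'n) set"
  assumes "compact K" "open U" "K \<subseteq> U"
  obtains \<delta> where "\<delta> > 0" "\<forall>\<mu>\<in>K. \<mu> - (\<chi> i. \<delta>) \<in> U"
proof -
  obtain \<epsilon> where "\<epsilon> > 0" and \<epsilon>: "(\<Union>\<mu>\<in>K. ball \<mu> \<epsilon>) \<subseteq> U"
    using compact_subset_open_imp_ball_epsilon_subset[OF assms] .
  define \<delta> where "\<delta> = \<epsilon> / (2 * real CARD('n))"
  have "\<delta> > 0"
    using \<open>\<epsilon> > 0\<close> by (simp add: \<delta>_def)
  have "norm (\<chi> i::'n. \<delta>) \<le> real CARD('n) * \<delta>"
    using norm_const_vec_le[where 'n='n, of \<delta>] \<open>\<delta> > 0\<close> by simp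
  also have "\<dots> < \<epsilon>"
    using \<open>\<epsilon> > 0\<close> by (simp add: \<delta>_def)
  finally have "\<mu> - (\<chi> i. \<delta>) \<in> ball \<mu> \<epsilon>" for \<mu> :: "real^'n"
    by (simp add: dist_norm)
  with \<epsilon> \<open>\<delta> > 0\<close> show thesis
    using that by blast
qed

lemma bounded_diameter_le_cube:
  fixes S :: "(real^'n) set"
  assumes "0 \<le> L" "\<forall>y\<in>S. \<forall>j. b$j \<le> y$j \<and> y$j \<le> b$j + L"
  shows "bounded S \<and> diameter S \<le> real CARD('n) * L"
proof -
  define c where "c = b + (\<chi> j. L)"
  have "S \<subseteq> cbox b c"
    using assms(2) by (auto simp: mem_box_cart c_def)
  moreover have "diameter (cbox b c) = norm (\<chi> j::'n. L)"
    using assms(1) by (subst diameter_cbox) (auto simp: c_def dist_norm Basis_vec_def inner_axis)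
  moreover have "norm (\<chi> j::'n. L) \<le> real CARD('n) * L"
    using norm_const_vec_le[where 'n='n, of L] assms(1) by simp
  ultimately show ?thesis
    using bounded_cbox bounded_subset diameter_subset by (metis order_trans)
qed

lemma sublevel_bounded_diameter:
  fixes f :: "real^'n \<Rightarrow> real"
  assumes "convex \<Gamma>" "concave_on \<Gamma> f" "\<forall>v\<in>\<Gamma>. \<forall>t>0. f (t *\<^sub>R v) = t * f v"
    and "pos_cone \<subseteq> \<Gamma>"
    and "c > 0" "\<forall>v\<in>pos_cone. c * root CARD('n) (\<Prod>i\<in>UNIV. v$i) \<le> f v"
    and "\<delta> > 0" "\<mu> - (\<chi> i. \<delta>) \<in> \<Gamma>" "0 \<le> f (\<mu> - (\<chi> i. \<delta>))" "0 \<le> C"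
  shows "bounded {v\<in>\<Gamma>. f v \<le> C \<and> v - \<mu> \<in> pos_cone} \<and>
    diameter {v\<in>\<Gamma>. f v \<le> C \<and> v - \<mu> \<in> pos_cone}
      \<le> real CARD('n) * ((C/c)^CARD('n) / \<delta>^(CARD('n) - 1))"
proof (intro bounded_diameter_le_cube ballI allI)
  show "0 \<le> (C/c)^CARD('n) / \<delta>^(CARD('n) - 1)"
    using assms(5,7,10) by simp
  fix v j assume v: "v \<in> {v\<in>\<Gamma>. f v \<le> C \<and> v - \<mu> \<in> pos_cone}"
  then have "v$j - (\<mu> - (\<chi> i. \<delta>))$j \<le> (C/c)^CARD('n) / \<delta>^(CARD('n) - 1)"
    using assms(7) by (intro sublevel_component_le[OF assms(1-6,8,9)])
      (auto simp: pos_cone_def less_imp_le)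
  then show "\<mu>$j \<le> v$j \<and> v$j \<le> \<mu>$j + (C/c)^CARD('n) / \<delta>^(CARD('n) - 1)"
    using v assms(7) by (auto simp: pos_cone_def less_imp_le)
qed

theorem lemma3p5:
  fixes M :: "'m::topological_space set"
    and g chi :: "'m \<Rightarrow> complex^'n^'n"
    and \<Gamma> :: "(real^'n) set"
    and f :: "real^'n \<Rightarrow> real"
    and C0 :: real
  assumes "compact M"
    and "continuous_on M g" and "continuous_on M chi"
    and "\<forall>x\<in>M. posdef_hermitian (g x)"
    and "\<forall>x\<in>M. hermitian_mat (chi x)"
    and "admissible_cone \<Gamma>"
    and "standing_f \<Gamma> f"
    and "\<forall>x\<in>M. \<forall>\<mu>\<in>lam_chi (g x) (chi x). \<mu> \<in> interior \<Gamma>"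
    and "C0 > 0"
  shows "\<exists>D. \<forall>x\<in>M. \<forall>\<mu>\<in>lam_chi (g x) (chi x).
           bounded {lp\<in>\<Gamma>. f lp \<le> C0 \<and> lp - \<mu> \<in> pos_cone} \<and>
           diameter {lp\<in>\<Gamma>. f lp \<le> C0 \<and> lp - \<mu> \<in> pos_cone} \<le> D"
proof -
  have cone: "convex \<Gamma>" "pos_cone \<subseteq> \<Gamma>"
    using assms(6) unfolding admissible_cone_def by auto
  have f: "concave_on \<Gamma> f" "\<forall>v\<in>\<Gamma>. \<forall>t>0. f (t *\<^sub>R v) = t * f v" "\<forall>v\<in>interior \<Gamma>. 0 < f v"
    and "\<exists>c>0. \<forall>v\<in>pos_cone. c * root CARD('n) (\<Prod>i\<in>UNIV. v$i) \<le> f v"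
    using assms(7) unfolding standing_f_def by auto
  then obtain c where c: "c > 0" "\<forall>v\<in>pos_cone. c * root CARD('n) (\<Prod>i\<in>UNIV. v$i) \<le> f v"
    by blast
  have "compact (\<Union>x\<in>M. lam_chi (g x) (chi x))" "(\<Union>x\<in>M. lam_chi (g x) (chi x)) \<subseteq> interior \<Gamma>"
    using compact_lam_chi_Union[OF assms(1-4)] assms(8) by auto
  then obtain \<delta> where \<delta>: "\<delta> > 0" "\<forall>x\<in>M. \<forall>\<mu>\<in>lam_chi (g x) (chi x). \<mu> - (\<chi> i. \<delta>) \<in> interior \<Gamma>"
    by (rule compact_shift_into_open[OF _ open_interior]) blast
  show ?thesis
  proof (intro exI ballI)
    fix x \<mu> assume "x \<in> M" "\<mu> \<in> lam_chi (g x) (chi x)"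
    then have "\<mu> - (\<chi> i. \<delta>) \<in> interior \<Gamma>"
      using \<delta>(2) by blast
    then show "bounded {lp\<in>\<Gamma>. f lp \<le> C0 \<and> lp - \<mu> \<in> pos_cone} \<and>
        diameter {lp\<in>\<Gamma>. f lp \<le> C0 \<and> lp - \<mu> \<in> pos_cone}
          \<le> real CARD('n) * ((C0/c)^CARD('n) / \<delta>^(CARD('n) - 1))"
      using sublevel_bounded_diameter[OF cone(1) f(1,2) cone(2) c \<delta>(1)] f(3) assms(9)
      by (simp add: interior_subset[THEN subsetD] less_imp_le)
  qed
qed

end
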